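(* Let $D$ be a regular $(v,k,\lambda,\mu)$-PDS in a finite group $G$ with $0<\mu<k$ and $\sqrt\Delta\in\mathbb{Z}$. Let $p$ be a prime dividing $\sqrt\Delta$ and $p^\ell$ the exact power of $p$ dividing $\sqrt\Delta$. If $h\in G$, $h\ne1$, and $p^\ell\nmid|C_G(h)|$, then \[|h^G\cap D|\,|C_G(h)|\equiv k-\theta_2\pmod{p^\ell},\] and for $h=1$, $|h^G\cap D|\,|C_G(h)|\equiv k+\theta_2(|G|-1)\pmod{p^\ell}$.
   Context: A $(v,k,\lambda,\mu)$-PDS in a group $G$ of order $v$ is a $k$-subset $D$ such that every nonidentity element of $D$ is $xy^{-1}$ ($x,y\in D$) in exactly $\lambda$ ways and every nonidentity element of $G\setminus D$ in exactly $\mu$ ways; regular means $D=D^{(-1)}$ and $1\notin D$. $\Delta=(\lambda-\mu)^2+4(k-\mu)$, $\theta_2=\frac12(\lambda-\mu-\sqrt\Delta)$. *)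

theory Defs
  imports "HOL-Algebra.Group" "HOL-Computational_Algebra.Primes" "HOL-Number_Theory.Cong"
begin

definition pds_rep :: "('a, 'b) monoid_scheme \<Rightarrow> 'a set \<Rightarrow> 'a \<Rightarrow> nat" where
  "pds_rep G D g = card {(x, y). x \<in> D \<and> y \<in> D \<and> x \<otimes>\<^bsub>G\<^esub> inv\<^bsub>G\<^esub> y = g}"

definition is_PDS :: "('a, 'b) monoid_scheme \<Rightarrow> 'a set \<Rightarrow> nat \<Rightarrow> nat \<Rightarrow> nat \<Rightarrow> nat \<Rightarrow> bool" where
  "is_PDS G D v k lam mu \<longleftrightarrow>
     card (carrier G) = v \<and> D \<subseteq> carrier G \<and> card D = k \<and>
     (\<forall>g \<in> D. g \<noteq> \<one>\<^bsub>G\<^esub> \<longrightarrow> pds_rep G D g = lam) \<and>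
     (\<forall>g \<in> carrier G - D. g \<noteq> \<one>\<^bsub>G\<^esub> \<longrightarrow> pds_rep G D g = mu)"

definition is_regular_PDS :: "('a, 'b) monoid_scheme \<Rightarrow> 'a set \<Rightarrow> nat \<Rightarrow> nat \<Rightarrow> nat \<Rightarrow> nat \<Rightarrow> bool" where
  "is_regular_PDS G D v k lam mu \<longleftrightarrow>
     is_PDS G D v k lam mu \<and> (\<lambda>x. inv\<^bsub>G\<^esub> x) ` D = D \<and> \<one>\<^bsub>G\<^esub> \<notin> D"

definition pds_Delta :: "nat \<Rightarrow> nat \<Rightarrow> nat \<Rightarrow> int" where
  "pds_Delta k lam mu = (int lam - int mu)^2 + 4 * (int k - int mu)"

text \<open>theta_2 = (lambda - mu - sqrt Delta)/2, given the integer square root s of Delta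
  (the division is exact since s and lambda - mu have the same parity).\<close>
definition pds_theta2 :: "nat \<Rightarrow> nat \<Rightarrow> int \<Rightarrow> int" where
  "pds_theta2 lam mu s = (int lam - int mu - s) div 2"

definition centralizer :: "('a, 'b) monoid_scheme \<Rightarrow> 'a \<Rightarrow> 'a set" where
  "centralizer G h = {g \<in> carrier G. g \<otimes>\<^bsub>G\<^esub> h = h \<otimes>\<^bsub>G\<^esub> g}"

definition conj_class :: "('a, 'b) monoid_scheme \<Rightarrow> 'a \<Rightarrow> 'a set" where
  "conj_class G h = {g \<otimes>\<^bsub>G\<^esub> h \<otimes>\<^bsub>G\<^esub> inv\<^bsub>G\<^esub> g | g. g \<in> carrier G}"

end

theory Submission
  imports
    Defs
    "HOL-Algebra.Multiplicative_Group"
    "Jordan_Normal_Form.Schur_Decomposition"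
    "Berlekamp_Zassenhaus.Factor_Bound"
begin

(*
  Write s = sqrt Delta and theta = theta_2, so that s = lam - mu - 2 theta and theta is a root of
  X^2 - (lam - mu) X - (k - mu).  In the rational group algebra the element B = D - theta 1
  satisfies B^2 = s B + mu G, hence E = (|G| B - (k - theta) G) / (|G| s) is an idempotent.
  For an idempotent e and g in G, the matrix T of the kernel (x, y) |-> e (x g y^-1) satisfies
  T^(|G|+1) = T, so the characteristic polynomial of T is a monic rational divisor of
  (X^(|G|+1) - X)^|G|; by Gauss's lemma it has integer coefficients, and so has the trace of T,
  which is sum_x e (x g x^-1).  For e = E and g = h this trace equals
  (|h^G \<inter> D| |C_G(h)| - theta |G| [h = 1] - (k - theta)) / s, so s, and with it p^l,
  divides the numerator.
*)

definition mat_trace :: "'a::comm_ring_1 mat \<Rightarrow> 'a" where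
  "mat_trace A = (\<Sum>i<dim_row A. A $$ (i, i))"

lemma mat_trace_mult_comm:
  assumes "A \<in> carrier_mat n n" and "B \<in> carrier_mat n n"
  shows "mat_trace (A * B) = mat_trace (B * A)"
proof -
  have "mat_trace (A * B) = (\<Sum>i<n. \<Sum>j<n. A $$ (i, j) * B $$ (j, i))"
    using assms unfolding mat_trace_def
    by (auto simp: scalar_prod_def atLeast0LessThan intro!: sum.cong)
  also have "\<dots> = (\<Sum>j<n. \<Sum>i<n. B $$ (j, i) * A $$ (i, j))"
    by (subst sum.swap) (simp add: mult.commute)
  also have "\<dots> = mat_trace (B * A)"
    using assms unfolding mat_trace_def
    by (auto simp: scalar_prod_def atLeast0LessThan intro!: sum.cong)
  finally show ?thesis .
qed

lemma mat_trace_similar: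
  assumes "similar_mat_wit A B P Q"
  shows "mat_trace A = mat_trace B"
proof -
  obtain n where B: "B \<in> carrier_mat n n"
    and P: "P \<in> carrier_mat n n" and Q: "Q \<in> carrier_mat n n"
    and QP: "Q * P = 1\<^sub>m n" and A_eq: "A = P * B * Q"
    using assms unfolding similar_mat_wit_def Let_def by auto
  have "mat_trace A = mat_trace (Q * (P * B))"
    unfolding A_eq by (rule mat_trace_mult_comm[OF mult_carrier_mat[OF P B] Q])
  also have "Q * (P * B) = B"
    using QP by (simp add: assoc_mult_mat[OF Q P B, symmetric] left_mult_one_mat[OF B])
  finally show ?thesis .
qed

lemma coeff_linear_factors_sum:
  fixes as :: "'a::idom list"
  assumes "as \<noteq> []"
  shows "Polynomial.coeff (\<Prod>a\<leftarrow>as. [:- a, 1:]) (length as - 1) = - sum_list as"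
  using assms
proof (induction as)
  case Nil
  then show ?case by simp
next
  case (Cons a as)
  let ?P = "\<Prod>a\<leftarrow>as. [:- a, 1:]"
  show ?case
  proof (cases "as = []")
    case True
    then show ?thesis by simp
  next
    case False
    then obtain m where m: "length as = Suc m"
      by (cases as) auto
    have "monic ?P"
      by (rule monic_prod_list) auto
    then have lead: "Polynomial.coeff ?P (length as) = 1"
      by (simp only: degree_linear_factors)
    have "[:- a, 1:] * ?P = smult (- a) ?P + pCons 0 ?P"
      by (simp add: mult_pCons_left)
    then have "Polynomial.coeff ([:- a, 1:] * ?P) (length as) = - a + Polynomial.coeff ?P m"
      using lead m by simp
    then show ?thesis
      using Cons.IH[OF False] m by simp
  qed
qed

lemma mat_trace_eq_char_poly_coeff:
  fixes A :: "complex mat"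
  assumes A: "A \<in> carrier_mat n n" and "n > 0"
  shows "mat_trace A = - Polynomial.coeff (char_poly A) (n - 1)"
proof -
  obtain as where cp: "char_poly A = (\<Prod>a\<leftarrow>as. [:- a, 1:])" and len: "length as = n"
    using char_poly_factorized[OF A] by blast
  obtain B P Q where sd: "schur_decomposition A as = (B, P, Q)"
    by (cases "schur_decomposition A as") auto
  from schur_decomposition[OF A cp sd]
  have sim: "similar_mat_wit A B P Q" and diag: "diag_mat B = as"
    by auto
  have B: "B \<in> carrier_mat n n"
    using sim A unfolding similar_mat_wit_def Let_def by auto
  have "mat_trace A = mat_trace B"
    by (rule mat_trace_similar[OF sim])
  also have "\<dots> = sum_list as"
    using B unfolding mat_trace_def diag[symmetric] diag_mat_def
    by (simp flip: sum_set_upt_conv_sum_list_nat add: atLeast0LessThan)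
  also have "\<dots> = - Polynomial.coeff (char_poly A) (n - 1)"
    using coeff_linear_factors_sum[of as] cp len \<open>n > 0\<close> by force
  finally show ?thesis .
qed

lemma linear_factors_dvd_power:
  fixes f :: "'a::idom poly"
  assumes "\<And>a. a \<in> set as \<Longrightarrow> poly f a = 0"
  shows "(\<Prod>a\<leftarrow>as. [:- a, 1:]) dvd f ^ length as"
  using assms
proof (induction as)
  case (Cons a as)
  then have "[:- a, 1:] dvd f"
    by (simp add: poly_eq_0_iff_dvd)
  then have "[:- a, 1:] * (\<Prod>a\<leftarrow>as. [:- a, 1:]) dvd f * f ^ length as"
    using Cons by (intro mult_dvd_mono) auto
  then show ?case
    by simp
qed simp

lemma eigenvalue_pow_Suc_eq:
  fixes A :: "'a::field mat"
  assumes A: "A \<in> carrier_mat n n" and pow: "A ^\<^sub>m Suc N = A" and "eigenvalue A a"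
  shows "a ^ Suc N = a"
proof -
  obtain v where ev: "eigenvector A v a"
    using \<open>eigenvalue A a\<close> unfolding eigenvalue_def by blast
  then have v: "v \<in> carrier_vec n" "v \<noteq> 0\<^sub>v n" and Av: "A *\<^sub>v v = a \<cdot>\<^sub>v v"
    using A unfolding eigenvector_def by auto
  have "a ^ Suc N \<cdot>\<^sub>v v = a \<cdot>\<^sub>v v"
    using eigenvector_pow[OF A ev, of "Suc N"] pow Av by simp
  moreover obtain i where "i < n" "v $ i \<noteq> 0"
    using v by (metis carrier_vecD eq_vecI index_zero_vec)
  ultimately show ?thesis
    using v by (metis carrier_vecD index_smult_vec(1) mult_cancel_right)
qed

lemma char_poly_dvd_pow_of_pow_Suc_eq:
  fixes A :: "complex mat"
  assumes A: "A \<in> carrier_mat n n" and pow: "A ^\<^sub>m Suc N = A"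
  shows "char_poly A dvd ([:0, 1:] ^ Suc N - [:0, 1:]) ^ n"
proof -
  obtain as where cp: "char_poly A = (\<Prod>a\<leftarrow>as. [:- a, 1:])" and len: "length as = n"
    using char_poly_factorized[OF A] by blast
  have "poly ([:0, 1:] ^ Suc N - [:0, 1:]) a = 0" if "a \<in> set as" for a
  proof -
    have "poly (char_poly A) a = 0"
      using that unfolding cp by (simp add: poly_prod_list prod_list_zero_iff)
    then have "a ^ Suc N = a"
      using eigenvalue_pow_Suc_eq[OF A pow] eigenvalue_root_char_poly[OF A] by blast
    then show ?thesis by simp
  qed
  then show ?thesis
    using linear_factors_dvd_power[of as] cp len by simp
qed

lemma monic_dvd_of_int_poly_coeff_Ints:
  fixes g :: "rat poly" and F :: "int poly"
  assumes g: "monic g" and F: "monic F" and dvd: "g dvd of_int_poly F"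
  shows "Polynomial.coeff g i \<in> \<int>"
proof -
  obtain q where gq: "of_int_poly F = g * q"
    using dvd by (elim dvdE)
  obtain r G where norm: "rat_to_normalized_int_poly g = (r, G)"
    by force
  then have g_eq: "g = smult r (of_int_poly G)" and "r > 0"
    using rat_to_normalized_int_poly by auto
  obtain H where "F = G * smult (content F) H"
    using rat_to_int_factor_explicit[OF gq norm] by blast
  then have "lead_coeff G * lead_coeff (smult (content F) H) = 1"
    using F by (metis lead_coeff_mult)
  then have "lead_coeff G = 1 \<or> lead_coeff G = -1"
    using zmult_eq_1_iff by blast
  moreover have "r * of_int (lead_coeff G) = 1"
    using g \<open>r > 0\<close> unfolding g_eq by simp
  ultimately have "r = 1"
    using \<open>r > 0\<close> by auto
  then show ?thesis
    unfolding g_eq by simp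
qed

lemma monic_X_pow_Suc_minus_X:
  assumes "N > 0"
  shows "monic ([:0, 1:] ^ Suc N - [:0, 1:] :: int poly)"
proof -
  have "degree (- [:0, 1:] :: int poly) < degree ([:0, 1:] ^ Suc N :: int poly)"
    using assms by (simp add: degree_power_eq)
  then have "lead_coeff (- [:0, 1:] + [:0, 1:] ^ Suc N) = lead_coeff ([:0, 1:] ^ Suc N :: int poly)"
    by (rule lead_coeff_add_le)
  then show ?thesis
    by (simp add: lead_coeff_power)
qed

lemma mat_trace_Ints_of_pow_Suc_eq:
  fixes T :: "rat mat"
  assumes T: "T \<in> carrier_mat n n" and "N > 0" and pow: "T ^\<^sub>m Suc N = T"
  shows "mat_trace T \<in> \<int>"
proof (cases "n = 0")
  case True
  then show ?thesis
    using T unfolding mat_trace_def by simp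
next
  case False
  define TC where "TC = map_mat (of_rat :: rat \<Rightarrow> complex) T"
  define f :: "int poly" where "f = ([:0, 1:] ^ Suc N - [:0, 1:]) ^ n"
  have TC: "TC \<in> carrier_mat n n"
    using T unfolding TC_def by simp
  have "TC ^\<^sub>m Suc N = TC"
    unfolding TC_def of_rat_hom.mat_hom_pow[OF T, symmetric] pow ..
  then have dvdC: "char_poly TC dvd ([:0, 1:] ^ Suc N - [:0, 1:]) ^ n"
    by (rule char_poly_dvd_pow_of_pow_Suc_eq[OF TC])
  have cp: "char_poly TC = map_poly of_rat (char_poly T)"
    unfolding TC_def by (rule of_rat_hom.char_poly_hom[OF T])
  interpret of_rat_poly_hom: map_poly_comm_ring_hom "of_rat :: rat \<Rightarrow> complex" ..
  have fC: "([:0, 1:] ^ Suc N - [:0, 1:]) ^ n = (map_poly of_rat (of_int_poly f) :: complex poly)"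
    unfolding f_def
    by (simp only: of_int_poly_hom.hom_power of_int_poly_hom.hom_minus of_int_hom.map_poly_pCons_hom
        of_rat_poly_hom.hom_power of_rat_poly_hom.hom_minus of_rat_hom.map_poly_pCons_hom) simp
  have "char_poly T dvd of_int_poly f"
    using dvdC unfolding cp fC by (rule of_rat_hom.dvd_map_poly_hom_imp_dvd)
  moreover have "monic f"
    unfolding f_def by (intro monic_power monic_X_pow_Suc_minus_X \<open>N > 0\<close>)
  ultimately have coeff_Ints: "Polynomial.coeff (char_poly T) i \<in> \<int>" for i
    using degree_monic_char_poly[OF T] by (intro monic_dvd_of_int_poly_coeff_Ints) auto
  have "of_rat (mat_trace T) = mat_trace TC"
    using T unfolding mat_trace_def TC_def by (simp add: of_rat_sum)
  also have "\<dots> = - of_rat (Polynomial.coeff (char_poly T) (n - 1))"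
    using mat_trace_eq_char_poly_coeff[OF TC] False unfolding cp by (simp add: coeff_map_poly)
  finally have "mat_trace T = - Polynomial.coeff (char_poly T) (n - 1)"
    by (simp flip: of_rat_minus)
  then show ?thesis
    using coeff_Ints by (simp add: Ints_minus)
qed

definition group_conv ::
    "('a, 'b) monoid_scheme \<Rightarrow> ('a \<Rightarrow> 'r::comm_ring_1) \<Rightarrow> ('a \<Rightarrow> 'r) \<Rightarrow> 'a \<Rightarrow> 'r"
  where "group_conv G f g x = (\<Sum>y\<in>carrier G. f y * g (inv\<^bsub>G\<^esub> y \<otimes>\<^bsub>G\<^esub> x))"

context group
begin

lemma l_inv_assoc [simp]:
  "x \<in> carrier G \<Longrightarrow> y \<in> carrier G \<Longrightarrow> inv x \<otimes> (x \<otimes> y) = y"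
  by (simp add: m_assoc[symmetric])

lemma r_inv_assoc [simp]:
  "x \<in> carrier G \<Longrightarrow> y \<in> carrier G \<Longrightarrow> x \<otimes> (inv x \<otimes> y) = y"
  by (simp add: m_assoc[symmetric])

lemma sum_left_translate:
  assumes "a \<in> carrier G"
  shows "(\<Sum>x\<in>carrier G. f (a \<otimes> x)) = (\<Sum>x\<in>carrier G. f x)"
  by (rule sum.reindex_bij_witness[where j = "\<lambda>x. a \<otimes> x" and i = "\<lambda>x. inv a \<otimes> x"])
    (use assms in auto)

lemma sum_inv_mult:
  assumes "x \<in> carrier G"
  shows "(\<Sum>y\<in>carrier G. f (inv y \<otimes> x)) = (\<Sum>y\<in>carrier G. f y)"
  by (rule sum.reindex_bij_witness[where j = "\<lambda>y. inv y \<otimes> x" and i = "\<lambda>y. x \<otimes> inv y"])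
    (use assms in \<open>auto simp: inv_mult_group m_assoc\<close>)

lemma group_conv_diff_left:
  "group_conv G (\<lambda>y. f y - g y) h x = group_conv G f h x - group_conv G g h x"
  unfolding group_conv_def by (simp add: algebra_simps sum_subtractf)

lemma group_conv_diff_right:
  "group_conv G f (\<lambda>y. g y - h y) x = group_conv G f g x - group_conv G f h x"
  unfolding group_conv_def by (simp add: algebra_simps sum_subtractf)

lemma group_conv_scale_left:
  "group_conv G (\<lambda>y. c * f y) g x = c * group_conv G f g x"
  unfolding group_conv_def by (simp add: sum_distrib_left mult.assoc)

lemma group_conv_scale_right:
  "group_conv G f (\<lambda>y. c * g y) x = c * group_conv G f g x"
  unfolding group_conv_def by (simp add: sum_distrib_left algebra_simps)

lemma group_conv_divide_left:
  "group_conv G (\<lambda>y. f y / c) g x = group_conv G f g x / (c :: 'r::field)"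
  unfolding group_conv_def by (simp add: sum_divide_distrib)

lemma group_conv_divide_right:
  "group_conv G f (\<lambda>y. g y / c) x = group_conv G f g x / (c :: 'r::field)"
  unfolding group_conv_def by (simp add: sum_divide_distrib)

lemma group_conv_const_left:
  assumes "x \<in> carrier G"
  shows "group_conv G (\<lambda>y. c) f x = c * (\<Sum>y\<in>carrier G. f y)"
  using assms unfolding group_conv_def by (simp add: sum_distrib_left[symmetric] sum_inv_mult)

lemma group_conv_const_right:
  "group_conv G f (\<lambda>y. c) x = (\<Sum>y\<in>carrier G. f y) * c"
  unfolding group_conv_def by (simp add: sum_distrib_right)

lemma sum_group_conv:
  "(\<Sum>x\<in>carrier G. group_conv G f g x) = (\<Sum>x\<in>carrier G. f x) * (\<Sum>x\<in>carrier G. g x)"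
proof -
  have "(\<Sum>x\<in>carrier G. group_conv G f g x)
      = (\<Sum>y\<in>carrier G. f y * (\<Sum>x\<in>carrier G. g (inv y \<otimes> x)))"
    unfolding group_conv_def by (subst sum.swap) (simp add: sum_distrib_left)
  also have "\<dots> = (\<Sum>y\<in>carrier G. f y * (\<Sum>x\<in>carrier G. g x))"
    by (intro sum.cong refl) (simp add: sum_left_translate)
  finally show ?thesis
    by (simp add: sum_distrib_right)
qed

lemma kernel_product_group_conv:
  assumes "x \<in> carrier G" "y \<in> carrier G" "a \<in> carrier G" "b \<in> carrier G"
  shows "(\<Sum>z\<in>carrier G. f (x \<otimes> a \<otimes> inv z) * g (z \<otimes> b \<otimes> inv y))
    = group_conv G f g (x \<otimes> a \<otimes> b \<otimes> inv y)"
  unfolding group_conv_def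
  by (rule sum.reindex_bij_witness[where j = "\<lambda>z. x \<otimes> a \<otimes> inv z"
        and i = "\<lambda>u. inv u \<otimes> x \<otimes> a"])
    (use assms in \<open>auto simp: inv_mult_group m_assoc\<close>)

end

locale finite_group = group +
  assumes finite_carrier [simp]: "finite (carrier G)"
begin

lemma group_conv_delta_left:
  assumes "x \<in> carrier G"
  shows "group_conv G (\<lambda>y. of_bool (y = \<one>)) f x = f x"
proof -
  have "carrier G \<inter> {y. y = \<one>} = {\<one>}"
    by auto
  then show ?thesis
    using assms unfolding group_conv_def by simp
qed

lemma group_conv_delta_right:
  assumes "x \<in> carrier G"
  shows "group_conv G f (\<lambda>y. of_bool (y = \<one>)) x = f x"
proof -
  have "carrier G \<inter> {y. inv y \<otimes> x = \<one>} = {x}"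
    using assms by (auto simp: inv_mult_group m_assoc) (metis inv_closed inv_equality inv_inv l_inv)
  then show ?thesis
    unfolding group_conv_def by simp
qed

end

locale enumerated_group = finite_group +
  fixes enum :: "nat \<Rightarrow> 'a"
  assumes enum_bij: "bij_betw enum {0..<card (carrier G)} (carrier G)"
begin

definition kernel_mat :: "('a \<Rightarrow> 'a \<Rightarrow> 'r::comm_ring_1) \<Rightarrow> 'r mat" where
  "kernel_mat K = mat (card (carrier G)) (card (carrier G)) (\<lambda>(i, j). K (enum i) (enum j))"

lemma kernel_mat_carrier [simp]: "kernel_mat K \<in> carrier_mat (card (carrier G)) (card (carrier G))"
  unfolding kernel_mat_def by simp

lemma enum_in_carrier: "i < card (carrier G) \<Longrightarrow> enum i \<in> carrier G"
  using enum_bij unfolding bij_betw_def by auto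

lemma kernel_mat_mult:
  "kernel_mat K * kernel_mat L = kernel_mat (\<lambda>x y. \<Sum>z\<in>carrier G. K x z * L z y)"
proof (rule eq_matI)
  fix i j
  assume "i < dim_row (kernel_mat (\<lambda>x y. \<Sum>z\<in>carrier G. K x z * L z y))"
    and "j < dim_col (kernel_mat (\<lambda>x y. \<Sum>z\<in>carrier G. K x z * L z y))"
  then have i: "i < card (carrier G)" and j: "j < card (carrier G)"
    by (simp_all add: kernel_mat_def)
  have "(kernel_mat K * kernel_mat L) $$ (i, j) = (\<Sum>l\<in>{0..<card (carrier G)}. K (enum i) (enum l) * L (enum l) (enum j))"
    using i j unfolding kernel_mat_def by (simp add: scalar_prod_def)
  also have "\<dots> = (\<Sum>z\<in>carrier G. K (enum i) z * L z (enum j))"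
    by (rule sum.reindex_bij_betw[OF enum_bij])
  finally show "(kernel_mat K * kernel_mat L) $$ (i, j)
      = kernel_mat (\<lambda>x y. \<Sum>z\<in>carrier G. K x z * L z y) $$ (i, j)"
    using i j unfolding kernel_mat_def by simp
qed (simp_all add: kernel_mat_def)

lemma kernel_mat_cong:
  assumes "\<And>x y. x \<in> carrier G \<Longrightarrow> y \<in> carrier G \<Longrightarrow> K x y = L x y"
  shows "kernel_mat K = kernel_mat L"
  unfolding kernel_mat_def using assms by (intro eq_matI) (auto simp: enum_in_carrier)

lemma mat_trace_kernel_mat: "mat_trace (kernel_mat K) = (\<Sum>x\<in>carrier G. K x x)"
proof -
  have "mat_trace (kernel_mat K) = (\<Sum>i\<in>{0..<card (carrier G)}. K (enum i) (enum i))"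
    unfolding mat_trace_def kernel_mat_def by (simp add: atLeast0LessThan)
  also have "\<dots> = (\<Sum>x\<in>carrier G. K x x)"
    by (rule sum.reindex_bij_betw[OF enum_bij])
  finally show ?thesis .
qed

lemma kernel_mat_idempotent_pow:
  assumes idem: "\<And>x. x \<in> carrier G \<Longrightarrow> group_conv G e e x = e x" and g: "g \<in> carrier G"
  shows "kernel_mat (\<lambda>x y. e (x \<otimes> g \<otimes> inv y)) ^\<^sub>m Suc r
    = kernel_mat (\<lambda>x y. e (x \<otimes> g [^] Suc r \<otimes> inv y))"
proof (induction r)
  case 0
  show ?case
    using g by (simp add: left_mult_one_mat[OF kernel_mat_carrier])
next
  case (Suc r)
  have "kernel_mat (\<lambda>x y. e (x \<otimes> g \<otimes> inv y)) ^\<^sub>m Suc (Suc r)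
      = kernel_mat (\<lambda>x y. e (x \<otimes> g [^] Suc r \<otimes> inv y))
        * kernel_mat (\<lambda>x y. e (x \<otimes> g \<otimes> inv y))"
    using Suc.IH by simp
  also have "\<dots> = kernel_mat (\<lambda>x y. e (x \<otimes> g [^] Suc (Suc r) \<otimes> inv y))"
    unfolding kernel_mat_mult
  proof (rule kernel_mat_cong)
    fix x y
    assume x: "x \<in> carrier G" and y: "y \<in> carrier G"
    have "x \<otimes> g [^] Suc r \<otimes> g \<otimes> inv y = x \<otimes> g [^] Suc (Suc r) \<otimes> inv y"
      using x y g by (simp add: m_assoc)
    then show "(\<Sum>z\<in>carrier G. e (x \<otimes> g [^] Suc r \<otimes> inv z) * e (z \<otimes> g \<otimes> inv y))
        = e (x \<otimes> g [^] Suc (Suc r) \<otimes> inv y)"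
      using x y g by (simp add: kernel_product_group_conv idem)
  qed
  finally show ?case .
qed

end

lemma (in finite_group) idempotent_conj_sum_Ints:
  fixes e :: "'a \<Rightarrow> rat"
  assumes idem: "\<And>x. x \<in> carrier G \<Longrightarrow> group_conv G e e x = e x" and g: "g \<in> carrier G"
  shows "(\<Sum>x\<in>carrier G. e (x \<otimes> g \<otimes> inv x)) \<in> \<int>"
proof -
  obtain enum where "bij_betw enum {0..<card (carrier G)} (carrier G)"
    using ex_bij_betw_nat_finite[OF finite_carrier] by blast
  then interpret enumerated_group G enum
    by unfold_locales
  let ?T = "kernel_mat (\<lambda>x y. e (x \<otimes> g \<otimes> inv y))"
  have "g [^] Suc (card (carrier G)) = g"
    using pow_order_eq_1[OF g] g unfolding Coset.order_def by simp
  then have "?T ^\<^sub>m Suc (card (carrier G)) = ?T"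
    using kernel_mat_idempotent_pow[OF idem g] by simp
  moreover have "card (carrier G) > 0"
    using g by (auto simp: card_gt_0_iff)
  ultimately have "mat_trace ?T \<in> \<int>"
    by (intro mat_trace_Ints_of_pow_Suc_eq[OF kernel_mat_carrier])
  then show ?thesis
    by (simp add: mat_trace_kernel_mat)
qed

lemma (in group) conj_eq_conj_iff:
  assumes "h \<in> carrier G" "x \<in> carrier G" "x0 \<in> carrier G"
  shows "x \<otimes> h \<otimes> inv x = x0 \<otimes> h \<otimes> inv x0 \<longleftrightarrow> inv x0 \<otimes> x \<in> centralizer G h"
proof -
  have "x \<otimes> h \<otimes> inv x = x0 \<otimes> h \<otimes> inv x0
      \<longleftrightarrow> inv x0 \<otimes> (x \<otimes> h \<otimes> inv x) \<otimes> x = inv x0 \<otimes> (x0 \<otimes> h \<otimes> inv x0) \<otimes> x"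
    using assms by simp
  also have "inv x0 \<otimes> (x \<otimes> h \<otimes> inv x) \<otimes> x = inv x0 \<otimes> x \<otimes> h"
    using assms by (simp add: m_assoc)
  also have "inv x0 \<otimes> (x0 \<otimes> h \<otimes> inv x0) \<otimes> x = h \<otimes> (inv x0 \<otimes> x)"
    using assms by (simp add: m_assoc)
  finally show ?thesis
    using assms unfolding centralizer_def by simp
qed

lemma (in group) conj_fiber_eq:
  assumes h: "h \<in> carrier G" and x0: "x0 \<in> carrier G"
  shows "{x \<in> carrier G. x \<otimes> h \<otimes> inv x = x0 \<otimes> h \<otimes> inv x0}
    = (\<lambda>c. x0 \<otimes> c) ` centralizer G h"
proof (intro equalityI subsetI)
  fix x
  assume x: "x \<in> {x \<in> carrier G. x \<otimes> h \<otimes> inv x = x0 \<otimes> h \<otimes> inv x0}"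
  then have "inv x0 \<otimes> x \<in> centralizer G h"
    using conj_eq_conj_iff[OF h _ x0] by blast
  moreover have "x = x0 \<otimes> (inv x0 \<otimes> x)"
    using x x0 by simp
  ultimately show "x \<in> (\<lambda>c. x0 \<otimes> c) ` centralizer G h"
    by (rule rev_image_eqI)
next
  fix x
  assume "x \<in> (\<lambda>c. x0 \<otimes> c) ` centralizer G h"
  then obtain c where c: "c \<in> centralizer G h" and x: "x = x0 \<otimes> c"
    by blast
  then have "c \<in> carrier G"
    unfolding centralizer_def by blast
  then show "x \<in> {x \<in> carrier G. x \<otimes> h \<otimes> inv x = x0 \<otimes> h \<otimes> inv x0}"
    using conj_eq_conj_iff[OF h _ x0, of x] c x0 unfolding x by simp
qed

lemma (in finite_group) card_conj_mem_eq:
  assumes h: "h \<in> carrier G"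
  shows "card {x \<in> carrier G. x \<otimes> h \<otimes> inv x \<in> D}
    = card (conj_class G h \<inter> D) * card (centralizer G h)"
proof -
  let ?c = "\<lambda>x. x \<otimes> h \<otimes> inv x"
  let ?S = "{x \<in> carrier G. ?c x \<in> D}"
  have fiber: "card {x \<in> ?S. ?c x = y} = card (centralizer G h)"
    if y: "y \<in> conj_class G h \<inter> D" for y
  proof -
    obtain x0 where x0: "x0 \<in> carrier G" and y_eq: "y = ?c x0"
      using y unfolding conj_class_def by blast
    have "{x \<in> ?S. ?c x = y} = {x \<in> carrier G. ?c x = ?c x0}"
      using y unfolding y_eq by auto
    also have "\<dots> = (\<lambda>c. x0 \<otimes> c) ` centralizer G h"
      by (rule conj_fiber_eq[OF h x0])
    finally show ?thesis
      using x0 by (simp add: card_image inj_on_def centralizer_def)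
  qed
  have "conj_class G h \<subseteq> carrier G"
    using h unfolding conj_class_def by blast
  then have "finite (conj_class G h \<inter> D)"
    using finite_subset finite_carrier finite_Int by blast
  moreover have "?c ` ?S \<subseteq> conj_class G h \<inter> D"
    unfolding conj_class_def by blast
  ultimately have "card ?S = (\<Sum>y\<in>conj_class G h \<inter> D. card {x \<in> ?S. ?c x = y})"
    using sum.group[of ?S "conj_class G h \<inter> D" ?c "\<lambda>_. 1 :: nat"] by simp
  also have "\<dots> = card (conj_class G h \<inter> D) * card (centralizer G h)"
    using fiber by simp
  finally show ?thesis .
qed

lemma pds_theta2_double:
  assumes "s^2 = pds_Delta k lam mu"
  shows "2 * pds_theta2 lam mu s = int lam - int mu - s"
proof -
  have "s^2 - (int lam - int mu)^2 = 4 * (int k - int mu)"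
    using assms unfolding pds_Delta_def by simp
  then have "even (s^2 - (int lam - int mu)^2)"
    by simp
  then have "even (int lam - int mu - s)"
    by simp
  then show ?thesis
    unfolding pds_theta2_def by simp
qed

lemma pds_theta2_root:
  assumes "s^2 = pds_Delta k lam mu"
  shows "(pds_theta2 lam mu s)^2 - (int lam - int mu) * pds_theta2 lam mu s - (int k - int mu) = 0"
proof -
  define \<theta> where "\<theta> = pds_theta2 lam mu s"
  have "s = int lam - int mu - 2 * \<theta>"
    using pds_theta2_double[OF assms] unfolding \<theta>_def by simp
  with assms have "(int lam - int mu - 2 * \<theta>)^2 = (int lam - int mu)^2 + 4 * (int k - int mu)"
    unfolding pds_Delta_def by simp
  then have "4 * (\<theta>^2 - (int lam - int mu) * \<theta> - (int k - int mu)) = 0"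
    by (simp add: power2_eq_square algebra_simps)
  then show ?thesis
    unfolding \<theta>_def by simp
qed

locale regular_pds = finite_group +
  fixes D :: "'a set" and v k lam mu :: nat
  assumes regular_PDS: "is_regular_PDS G D v k lam mu"
begin

lemma D_subset: "D \<subseteq> carrier G"
  and card_D: "card D = k"
  and pds_rep_in_D: "\<And>x. x \<in> D \<Longrightarrow> x \<noteq> \<one> \<Longrightarrow> pds_rep G D x = lam"
  and pds_rep_notin_D: "\<And>x. x \<in> carrier G \<Longrightarrow> x \<notin> D \<Longrightarrow> x \<noteq> \<one> \<Longrightarrow> pds_rep G D x = mu"
  and inv_image_D: "(\<lambda>x. inv x) ` D = D"
  and one_notin_D: "\<one> \<notin> D"
  using regular_PDS unfolding is_regular_PDS_def is_PDS_def by auto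

lemma inv_mem_D_iff:
  assumes "x \<in> carrier G"
  shows "inv x \<in> D \<longleftrightarrow> x \<in> D"
proof -
  have inv_in: "inv y \<in> D" if "y \<in> D" for y
    using inv_image_D that by blast
  show ?thesis
    using inv_in[of "inv x"] inv_in[of x] assms by auto
qed

lemma pds_rep_eq_card:
  assumes x: "x \<in> carrier G"
  shows "pds_rep G D x = card {y \<in> carrier G. y \<in> D \<and> inv y \<otimes> x \<in> D}"
proof -
  have "{(a, b). a \<in> D \<and> b \<in> D \<and> a \<otimes> inv b = x}
      = (\<lambda>y. (y, inv x \<otimes> y)) ` {y \<in> carrier G. y \<in> D \<and> inv y \<otimes> x \<in> D}"
  proof (intro equalityI subsetI)
    fix p
    assume "p \<in> {(a, b). a \<in> D \<and> b \<in> D \<and> a \<otimes> inv b = x}"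
    then obtain a b where p: "p = (a, b)" and a: "a \<in> D" and b: "b \<in> D" and ab: "a \<otimes> inv b = x"
      by blast
    have ac: "a \<in> carrier G" and bc: "b \<in> carrier G"
      using a b D_subset by auto
    then have "b = inv x \<otimes> a" and "inv a \<otimes> x = inv b"
      using x ab by (auto simp: inv_mult_group m_assoc)
    then show "p \<in> (\<lambda>y. (y, inv x \<otimes> y)) ` {y \<in> carrier G. y \<in> D \<and> inv y \<otimes> x \<in> D}"
      using p a b ac bc inv_mem_D_iff by auto
  next
    fix p
    assume "p \<in> (\<lambda>y. (y, inv x \<otimes> y)) ` {y \<in> carrier G. y \<in> D \<and> inv y \<otimes> x \<in> D}"
    then obtain y where p: "p = (y, inv x \<otimes> y)" and y: "y \<in> carrier G" "y \<in> D" "inv y \<otimes> x \<in> D"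
      by blast
    have "inv (inv y \<otimes> x) = inv x \<otimes> y"
      using x y by (simp add: inv_mult_group)
    then have "inv x \<otimes> y \<in> D"
      using inv_mem_D_iff[of "inv y \<otimes> x"] x y by simp
    moreover have "y \<otimes> inv (inv x \<otimes> y) = x"
      using x y by (simp add: inv_mult_group m_assoc)
    ultimately show "p \<in> {(a, b). a \<in> D \<and> b \<in> D \<and> a \<otimes> inv b = x}"
      using p y by simp
  qed
  moreover have "inj_on (\<lambda>y. (y, inv x \<otimes> y)) {y \<in> carrier G. y \<in> D \<and> inv y \<otimes> x \<in> D}"
    by (rule inj_onI) simp
  ultimately show ?thesis
    unfolding pds_rep_def by (simp add: card_image)
qed

lemma pds_rep_one: "pds_rep G D \<one> = k"
proof -
  have "{y \<in> carrier G. y \<in> D \<and> inv y \<otimes> \<one> \<in> D} = D"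
    using D_subset by (auto simp: inv_mem_D_iff)
  then show ?thesis
    using pds_rep_eq_card[of \<one>] card_D by simp
qed

lemma group_conv_indicator_D:
  assumes x: "x \<in> carrier G"
  shows "group_conv G (\<lambda>y. of_bool (y \<in> D)) (\<lambda>y. of_bool (y \<in> D)) x
    = (if x = \<one> then of_nat k else if x \<in> D then of_nat lam else of_nat mu)"
proof -
  have "group_conv G (\<lambda>y. of_bool (y \<in> D)) (\<lambda>y. of_bool (y \<in> D)) x
      = (\<Sum>y\<in>carrier G. of_bool (y \<in> D \<and> inv y \<otimes> x \<in> D))"
    unfolding group_conv_def by (simp only: of_bool_conj)
  also have "\<dots> = of_nat (card {y \<in> carrier G. y \<in> D \<and> inv y \<otimes> x \<in> D})"
    by (simp add: Int_def)
  also have "\<dots> = of_nat (pds_rep G D x)"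
    by (simp only: pds_rep_eq_card[OF x])
  finally show ?thesis
    using x pds_rep_one pds_rep_in_D pds_rep_notin_D by (cases "x = \<one>") auto
qed

definition shifted_indicator :: "'r::comm_ring_1 \<Rightarrow> 'a \<Rightarrow> 'r" where
  "shifted_indicator \<theta> = (\<lambda>x. of_bool (x \<in> D) - \<theta> * of_bool (x = \<one>))"

lemma group_conv_shifted_indicator:
  fixes \<theta> :: "'r::comm_ring_1"
  assumes root: "\<theta>^2 - (of_nat lam - of_nat mu) * \<theta> - (of_nat k - of_nat mu) = 0"
    and x: "x \<in> carrier G"
  shows "group_conv G (shifted_indicator \<theta>) (shifted_indicator \<theta>) x
    = (of_nat lam - of_nat mu - 2 * \<theta>) * shifted_indicator \<theta> x + of_nat mu"
proof -
  have conv_eq: "group_conv G (shifted_indicator \<theta>) (shifted_indicator \<theta>) x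
      = (if x = \<one> then of_nat k else if x \<in> D then of_nat lam else of_nat mu)
        - 2 * \<theta> * of_bool (x \<in> D) + \<theta>^2 * of_bool (x = \<one>)"
    unfolding shifted_indicator_def
    by (simp only: group_conv_diff_left group_conv_diff_right group_conv_scale_left
        group_conv_scale_right group_conv_delta_left[OF x] group_conv_delta_right[OF x]
        group_conv_indicator_D[OF x])
      (simp add: algebra_simps power2_eq_square)
  show ?thesis
  proof (cases "x = \<one>")
    case True
    then have "group_conv G (shifted_indicator \<theta>) (shifted_indicator \<theta>) x
        = (of_nat lam - of_nat mu - 2 * \<theta>) * shifted_indicator \<theta> x + of_nat mu
          - (\<theta>^2 - (of_nat lam - of_nat mu) * \<theta> - (of_nat k - of_nat mu))"
      using conv_eq one_notin_D unfolding shifted_indicator_def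
      by (simp add: algebra_simps power2_eq_square)
    then show ?thesis
      using root by simp
  next
    case False
    then show ?thesis
      using conv_eq unfolding shifted_indicator_def
      by (cases "x \<in> D") (simp_all add: algebra_simps)
  qed
qed

lemma sum_shifted_indicator:
  "(\<Sum>x\<in>carrier G. shifted_indicator \<theta> x) = of_nat k - \<theta>"
proof -
  have "carrier G \<inter> {x. x \<in> D} = D" and "carrier G \<inter> {x. x = \<one>} = {\<one>}"
    using D_subset by auto
  then show ?thesis
    unfolding shifted_indicator_def by (simp add: sum_subtractf sum_distrib_left[symmetric] card_D)
qed

lemma sum_shifted_indicator_conj:
  fixes \<theta> :: "'r::comm_ring_1"
  assumes h: "h \<in> carrier G"
  shows "(\<Sum>x\<in>carrier G. shifted_indicator \<theta> (x \<otimes> h \<otimes> inv x))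
    = of_nat (card {x \<in> carrier G. x \<otimes> h \<otimes> inv x \<in> D})
      - \<theta> * of_nat (card (carrier G)) * of_bool (h = \<one>)"
proof -
  have "x \<otimes> h \<otimes> inv x = \<one> \<longleftrightarrow> h = \<one>" if x: "x \<in> carrier G" for x
  proof -
    have "x \<otimes> h \<otimes> inv x = \<one> \<longleftrightarrow> x \<otimes> h \<otimes> inv x \<otimes> x = \<one> \<otimes> x"
      using h x by (simp del: l_one)
    also have "\<dots> \<longleftrightarrow> h = \<one>"
      using h x by (simp add: m_assoc)
    finally show ?thesis .
  qed
  then have "(\<Sum>x\<in>carrier G. of_bool (x \<otimes> h \<otimes> inv x = \<one>))
      = (\<Sum>x\<in>carrier G. of_bool (h = \<one>) :: 'r)"
    by (intro sum.cong) simp_all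
  then show ?thesis
    unfolding shifted_indicator_def
    by (simp add: sum_subtractf sum_distrib_left[symmetric] Int_def mult.assoc)
qed

lemma pds_parameter_identity:
  fixes \<theta> :: "'r::comm_ring_1"
  assumes root: "\<theta>^2 - (of_nat lam - of_nat mu) * \<theta> - (of_nat k - of_nat mu) = 0"
  shows "(of_nat k - \<theta>)^2
    = (of_nat lam - of_nat mu - 2 * \<theta>) * (of_nat k - \<theta>) + of_nat (card (carrier G)) * of_nat mu"
proof -
  have "(of_nat k - \<theta>)^2 = (\<Sum>x\<in>carrier G. group_conv G (shifted_indicator \<theta>) (shifted_indicator \<theta>) x)"
    by (simp add: sum_group_conv sum_shifted_indicator power2_eq_square)
  also have "\<dots> = (\<Sum>x\<in>carrier G. (of_nat lam - of_nat mu - 2 * \<theta>) * shifted_indicator \<theta> x + of_nat mu)"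
    by (intro sum.cong refl group_conv_shifted_indicator[OF root])
  also have "\<dots> = (of_nat lam - of_nat mu - 2 * \<theta>) * (of_nat k - \<theta>) + of_nat (card (carrier G)) * of_nat mu"
    by (simp add: sum.distrib sum_distrib_left[symmetric] sum_shifted_indicator)
  finally show ?thesis .
qed

(* Acting on the rational group algebra by multiplication, this is the projection onto the
   theta_1-eigenspace of D: it kills the constants and the theta_2-eigenspace. *)
definition pds_idempotent :: "'r::field \<Rightarrow> 'a \<Rightarrow> 'r" where
  "pds_idempotent \<theta> = (\<lambda>x. (of_nat (card (carrier G)) * shifted_indicator \<theta> x - (of_nat k - \<theta>))
     / (of_nat (card (carrier G)) * (of_nat lam - of_nat mu - 2 * \<theta>)))"

lemma group_conv_pds_idempotent:
  fixes \<theta> :: "'r::field_char_0"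
  assumes root: "\<theta>^2 - (of_nat lam - of_nat mu) * \<theta> - (of_nat k - of_nat mu) = 0"
    and s_nonzero: "of_nat lam - of_nat mu - 2 * \<theta> \<noteq> 0" and x: "x \<in> carrier G"
  shows "group_conv G (pds_idempotent \<theta>) (pds_idempotent \<theta>) x = pds_idempotent \<theta> x"
proof -
  define n :: 'r where "n = of_nat (card (carrier G))"
  define c where "c = of_nat k - \<theta>"
  define s where "s = of_nat lam - of_nat mu - 2 * \<theta>"
  define B where "B = shifted_indicator \<theta>"
  have "n \<noteq> 0"
    using x unfolding n_def by (auto simp: card_gt_0_iff)
  have expand: "group_conv G (\<lambda>y. n * B y - c) (\<lambda>y. n * B y - c) x
      = n * n * group_conv G B B x - n * c * c"
  proof -
    have sum_B: "(\<Sum>y\<in>carrier G. B y) = c"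
      unfolding B_def c_def by (rule sum_shifted_indicator)
    have sum_c: "(\<Sum>y\<in>carrier G. c) = n * c"
      by (simp add: n_def)
    show ?thesis
      by (simp only: group_conv_diff_left group_conv_diff_right group_conv_scale_left
          group_conv_scale_right group_conv_const_left[OF x] group_conv_const_right
          sum_distrib_left[symmetric] sum_B sum_c)
        (simp add: algebra_simps)
  qed
  have "group_conv G B B x = s * B x + of_nat mu"
    unfolding B_def s_def by (rule group_conv_shifted_indicator[OF root x])
  with expand have "group_conv G (\<lambda>y. n * B y - c) (\<lambda>y. n * B y - c) x
      = n * s * (n * B x - c) - n * (c^2 - s * c - n * of_nat mu)"
    by (simp add: algebra_simps power2_eq_square)
  also have "c^2 - s * c - n * of_nat mu = 0"
    using pds_parameter_identity[OF root] unfolding c_def s_def n_def by simp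
  finally have M: "group_conv G (\<lambda>y. n * B y - c) (\<lambda>y. n * B y - c) x = n * s * (n * B x - c)"
    by simp
  have E: "pds_idempotent \<theta> = (\<lambda>y. (n * B y - c) / (n * s))"
    unfolding pds_idempotent_def n_def B_def c_def s_def ..
  show ?thesis
    unfolding E group_conv_divide_left group_conv_divide_right M
    using \<open>n \<noteq> 0\<close> s_nonzero unfolding s_def by simp
qed

lemma sum_pds_idempotent_conj:
  fixes \<theta> :: "'r::field_char_0"
  assumes h: "h \<in> carrier G"
  shows "(\<Sum>x\<in>carrier G. pds_idempotent \<theta> (x \<otimes> h \<otimes> inv x))
    = (of_nat (card {x \<in> carrier G. x \<otimes> h \<otimes> inv x \<in> D})
        - \<theta> * of_nat (card (carrier G)) * of_bool (h = \<one>) - (of_nat k - \<theta>))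
      / (of_nat lam - of_nat mu - 2 * \<theta>)"
proof -
  let ?n = "of_nat (card (carrier G)) :: 'r"
  let ?B = "\<lambda>x. shifted_indicator \<theta> (x \<otimes> h \<otimes> inv x)"
  have "?n \<noteq> 0"
    using h by (auto simp: card_gt_0_iff)
  have "(\<Sum>x\<in>carrier G. pds_idempotent \<theta> (x \<otimes> h \<otimes> inv x))
      = (?n * (\<Sum>x\<in>carrier G. ?B x) - ?n * (of_nat k - \<theta>)) / (?n * (of_nat lam - of_nat mu - 2 * \<theta>))"
    unfolding pds_idempotent_def
    by (simp add: sum_divide_distrib[symmetric] sum_subtractf sum_distrib_left)
  also have "\<dots> = ((\<Sum>x\<in>carrier G. ?B x) - (of_nat k - \<theta>)) / (of_nat lam - of_nat mu - 2 * \<theta>)"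
    using \<open>?n \<noteq> 0\<close> by (simp add: right_diff_distrib[symmetric])
  finally show ?thesis
    unfolding sum_shifted_indicator_conj[OF h] .
qed

lemma dvd_conj_count:
  fixes \<theta> s :: int
  assumes root: "\<theta>^2 - (int lam - int mu) * \<theta> - (int k - int mu) = 0"
    and s: "s = int lam - int mu - 2 * \<theta>" and "s \<noteq> 0" and h: "h \<in> carrier G"
  shows "s dvd int (card {x \<in> carrier G. x \<otimes> h \<otimes> inv x \<in> D})
    - \<theta> * int (card (carrier G)) * of_bool (h = \<one>) - (int k - \<theta>)"
    (is "s dvd ?Y")
proof -
  let ?E = "pds_idempotent (of_int \<theta> :: rat)"
  have root_rat: "(of_int \<theta>)^2 - (of_nat lam - of_nat mu) * of_int \<theta> - (of_nat k - of_nat mu) = (0::rat)"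
    using arg_cong[OF root, of "of_int :: int \<Rightarrow> rat"] by simp
  have s_rat: "of_nat lam - of_nat mu - 2 * of_int \<theta> = (of_int s :: rat)"
    using s by simp
  have "(\<Sum>x\<in>carrier G. ?E (x \<otimes> h \<otimes> inv x)) \<in> \<int>"
    using group_conv_pds_idempotent[OF root_rat] s_rat \<open>s \<noteq> 0\<close>
    by (intro idempotent_conj_sum_Ints h) simp
  moreover have "(\<Sum>x\<in>carrier G. ?E (x \<otimes> h \<otimes> inv x)) = of_int ?Y / of_int s"
    unfolding sum_pds_idempotent_conj[OF h] s_rat by simp
  ultimately obtain z where "of_int ?Y / of_int s = (of_int z :: rat)"
    by (auto elim: Ints_cases)
  then have "?Y = s * z"
    using \<open>s \<noteq> 0\<close> by (simp add: field_simps flip: of_int_mult of_int_eq_iff)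
  then show ?thesis
    by simp
qed

end

theorem mainTheorem16:
  fixes G :: "('a, 'b) monoid_scheme" and D :: "'a set"
    and v k lam mu :: nat and s :: int and p l :: nat and h :: 'a
  assumes "group G" and "finite (carrier G)"
    and "is_regular_PDS G D v k lam mu"
    and "0 < mu" and "mu < k"
    and "s \<ge> 0" and "s^2 = pds_Delta k lam mu"
    and "prime p" and "int p dvd s"
    and "int p ^ l dvd s" and "\<not> int p ^ (l + 1) dvd s"
    and "h \<in> carrier G"
  shows "(h \<noteq> \<one>\<^bsub>G\<^esub> \<and> \<not> p ^ l dvd card (centralizer G h) \<longrightarrow>
           [int (card (conj_class G h \<inter> D) * card (centralizer G h))
              = int k - pds_theta2 lam mu s] (mod int p ^ l))
       \<and> (h = \<one>\<^bsub>G\<^esub> \<longrightarrow>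
           [int (card (conj_class G h \<inter> D) * card (centralizer G h))
              = int k + pds_theta2 lam mu s * (int (card (carrier G)) - 1)] (mod int p ^ l))"
proof -
  \<comment> \<open>The congruences hold modulo s itself; of the hypotheses on mu, s, p, l and the
    centralizer only mu < k (making s nonzero), the value of s^2 and p^l dvd s are used.\<close>
  interpret regular_pds G D v k lam mu
    using assms(1-3)
    by (simp add: regular_pds_def regular_pds_axioms_def finite_group_def finite_group_axioms_def)
  have "0 < pds_Delta k lam mu"
    unfolding pds_Delta_def using assms(5) by (intro add_nonneg_pos) simp_all
  then have "s \<noteq> 0"
    using assms(7) by auto
  have "s dvd int (card {x \<in> carrier G. x \<otimes>\<^bsub>G\<^esub> h \<otimes>\<^bsub>G\<^esub> inv\<^bsub>G\<^esub> x \<in> D})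
      - pds_theta2 lam mu s * int (card (carrier G)) * of_bool (h = \<one>\<^bsub>G\<^esub>)
      - (int k - pds_theta2 lam mu s)"
    using pds_theta2_double[OF assms(7)]
    by (intro dvd_conj_count pds_theta2_root[OF assms(7)] \<open>s \<noteq> 0\<close> assms(12)) simp
  then have "int p ^ l dvd int (card (conj_class G h \<inter> D) * card (centralizer G h))
      - pds_theta2 lam mu s * int (card (carrier G)) * of_bool (h = \<one>\<^bsub>G\<^esub>)
      - (int k - pds_theta2 lam mu s)"
    using assms(10) card_conj_mem_eq[OF assms(12)] by (metis dvd_trans)
  then show ?thesis
    by (auto simp: cong_iff_dvd_diff algebra_simps)
qed

end
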